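(* Let $b=2$, $\gamma\in(1/2,1)$ and $\psi(x)=-2\pi\sin(2\pi x)$. If $\gamma^3\le\sqrt2/8$, then $e(1)=1$.
   Context: $\mathcal{A}=\{0,1\}$. $S(x,\mathbf{i})=\sum_{n\ge1}\gamma^{n-1}\psi\big(\frac{x+i_1+i_22+\cdots+i_n2^{n-1}}{2^n}\big)$ for $\mathbf{i}\in\mathcal{A}^{\mathbb{Z}^+}$, $S'=\partial_xS$. Sequences $\mathbf{i},\mathbf{j}$ are $(\varepsilon,\delta)$-tangent at $x_0$ if $|S(x_0,\mathbf{i})-S(x_0,\mathbf{j})|\le\varepsilon$ and $|S'(x_0,\mathbf{i})-S'(x_0,\mathbf{j})|\le\delta$. $E(q,x_0;\varepsilon,\delta)$: pairs $(\mathbf{k},\mathbf{l})\in\mathcal{A}^q\times\mathcal{A}^q$ such that some concatenations $\mathbf{ku},\mathbf{lv}$ ($\mathbf{u},\mathbf{v}\in\mathcal{A}^{\mathbb{Z}^+}$) are $(\varepsilon,\delta)$-tangent at $x_0$. For $J\subset\mathbb{R}$: $E(q,J)=\bigcap_{\varepsilon,\delta>0}\bigcup_{x\in J}E(q,x;\varepsilon,\delta)$, $e(q,J)=\max_{\mathbf{k}}\#\{\mathbf{l}:(\mathbf{k},\mathbf{l})\in E(q,J)\}$, and $e(q)=\lim_{p\to\infty}\max_{0\le k<2^p}e(q,[k/2^p,(k+1)/2^p])$. *)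

theory Defs
  imports "HOL-Analysis.Analysis"
begin

text \<open>Alphabet {0,1} encoded as bool (True = 1). Infinite sequences
 i_1 i_2 ... are functions nat => bool with i_(n+1) = i n (0-based).
 Finite words of length q are lists of length q.\<close>

definition psi :: "real \<Rightarrow> real" where
  "psi x = - 2 * pi * sin (2 * pi * x)"

text \<open>S(x,i) = sum_{n>=1} gamma^(n-1) psi((x + i_1 + i_2 2 + ... + i_n 2^(n-1)) / 2^n),
  written with the shifted index m = n - 1.\<close>
definition S :: "real \<Rightarrow> real \<Rightarrow> (nat \<Rightarrow> bool) \<Rightarrow> real" where
  "S \<gamma> x i = (\<Sum>m. \<gamma> ^ m * psi ((x + (\<Sum>k\<le>m. of_bool (i k) * 2 ^ k)) / 2 ^ (Suc m)))"

definition S' :: "real \<Rightarrow> real \<Rightarrow> (nat \<Rightarrow> bool) \<Rightarrow> real" where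
  "S' \<gamma> x i = deriv (\<lambda>y. S \<gamma> y i) x"

definition tangent :: "real \<Rightarrow> real \<Rightarrow> real \<Rightarrow> real \<Rightarrow> (nat \<Rightarrow> bool) \<Rightarrow> (nat \<Rightarrow> bool) \<Rightarrow> bool" where
  "tangent \<gamma> \<epsilon> \<delta> x0 i j \<longleftrightarrow>
     \<bar>S \<gamma> x0 i - S \<gamma> x0 j\<bar> \<le> \<epsilon> \<and> \<bar>S' \<gamma> x0 i - S' \<gamma> x0 j\<bar> \<le> \<delta>"

definition conc :: "bool list \<Rightarrow> (nat \<Rightarrow> bool) \<Rightarrow> nat \<Rightarrow> bool" where
  "conc k u n = (if n < length k then k ! n else u (n - length k))"

definition E_pt :: "real \<Rightarrow> nat \<Rightarrow> real \<Rightarrow> real \<Rightarrow> real \<Rightarrow> (bool list \<times> bool list) set" where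
  "E_pt \<gamma> q x0 \<epsilon> \<delta> = {(k, l). length k = q \<and> length l = q \<and>
      (\<exists>u v. tangent \<gamma> \<epsilon> \<delta> x0 (conc k u) (conc l v))}"

definition E_set :: "real \<Rightarrow> nat \<Rightarrow> real set \<Rightarrow> (bool list \<times> bool list) set" where
  "E_set \<gamma> q J = (\<Inter>\<epsilon>\<in>{0<..}. \<Inter>\<delta>\<in>{0<..}. \<Union>x\<in>J. E_pt \<gamma> q x \<epsilon> \<delta>)"

definition e_J :: "real \<Rightarrow> nat \<Rightarrow> real set \<Rightarrow> nat" where
  "e_J \<gamma> q J = Max ((\<lambda>k. card {l. (k, l) \<in> E_set \<gamma> q J}) ` {k. length k = q})"

definition e :: "real \<Rightarrow> nat \<Rightarrow> real" where
  "e \<gamma> q = lim (\<lambda>p. real (Max ((\<lambda>k. e_J \<gamma> q {real k / 2 ^ p .. real (Suc k) / 2 ^ p}) ` {..<(2::nat) ^ p})))"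

end

theory Submission
  imports Defs
begin

text \<open>Only \<open>\<gamma> \<le> 0.5613\<close> is used (the cube root of \<open>sqrt 2 / 8\<close> is about 0.56123).
  For such \<open>\<gamma>\<close> the function \<open>2 \<pi> U (\<pi> y)\<close>, for an explicit trigonometric polynomial \<open>U\<close>,
  majorises \<open>S \<gamma> y i\<close> on \<open>[0,1]\<close> for every digit sequence \<open>i\<close>: it dominates
  \<open>\<psi>((y+b)/2) + \<gamma> 2 \<pi> U (\<pi> (y+b)/2)\<close> for both digits \<open>b\<close> (a polynomial inequality in
  the tangent of the half angle, certified by Bernstein coefficients), so iterating
  \<open>S(y,i) = \<psi>((y+i\<^sub>1)/2) + \<gamma> S((y+i\<^sub>1)/2, shifted i)\<close> gives the bound, and the
  reflection \<open>S(1-y, not i) = -S(y,i)\<close> gives the matching lower bound.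
  At \<open>x \<in> [0,1]\<close>, sequences starting with 0 and with 1 have leading terms differing by
  \<open>4 \<pi> sin (\<pi> x)\<close> in value and \<open>4 \<pi>\<^sup>2 cos (\<pi> x)\<close> in slope, while their tails differ by at
  most \<open>2 \<pi> \<gamma> (U (\<pi> x/2) + U (\<pi>/2 - \<pi> x/2))\<close> in value and \<open>2 \<gamma> \<pi>\<^sup>2 / (1 - \<gamma>/2)\<close> in
  slope. Where \<open>|cos (\<pi> x)| \<le> 0.391\<close> the value gap wins, elsewhere the slope gap does;
  so the two first digits are never tangent and every row of \<open>E(1,J)\<close> is a singleton.\<close>

definition bernstein_form :: "real list \<Rightarrow> real \<Rightarrow> real \<Rightarrow> real \<Rightarrow> real" where
  "bernstein_form cs a b t =
     (\<Sum>(k, c) \<leftarrow> List.enumerate 0 cs. c * (t - a) ^ k * (b - t) ^ (length cs - 1 - k))"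

lemma bernstein_form_nonneg:
  assumes "\<forall>c \<in> set cs. 0 \<le> c" and "a \<le> t" and "t \<le> b"
  shows "0 \<le> bernstein_form cs a b t"
  unfolding bernstein_form_def using assms
  by (intro sum_list_nonneg) (auto simp: in_set_enumerate_eq)

lemma quarter_circle_rational_param:
  fixes s c :: real
  assumes "0 \<le> s" and "0 \<le> c" and "s^2 + c^2 = 1"
  obtains t where "0 \<le> t" "t \<le> 1" "s * (1 + t^2) = 2 * t" "c * (1 + t^2) = 1 - t^2"
proof
  define t where "t = s / (1 + c)"
  have c1: "1 + c > 0" using assms by simp
  have "s^2 \<le> 1" using assms zero_le_power2[of c] by linarith
  then have "s \<le> 1" using power2_le_imp_le[of s 1] by simp
  show "0 \<le> t" "t \<le> 1" using assms c1 \<open>s \<le> 1\<close> by (simp_all add: t_def divide_le_eq)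
  have "s^2 = (1 - c) * (1 + c)" using assms by (simp add: algebra_simps power2_eq_square)
  then have "t^2 = (1 - c) / (1 + c)"
    using c1 by (simp add: t_def power_divide power2_eq_square)
  then have one_plus_t2: "1 + t^2 = 2 / (1 + c)"
    using c1 by (simp add: field_simps)
  show "s * (1 + t^2) = 2 * t" unfolding one_plus_t2 by (simp add: t_def)
  have "c * (1 + t^2) = 1 - (1 + t^2 - 1)" unfolding one_plus_t2 using c1 by (simp add: field_simps)
  then show "c * (1 + t^2) = 1 - t^2" by simp
qed

definition U_poly :: "real \<Rightarrow> real \<Rightarrow> real" where
  "U_poly s c = 1.4772 + 0.0041 * s + 0.1493 * c + 0.0383 * (2 * s * c) - 0.3123 * (c^2 - s^2)"

definition U :: "real \<Rightarrow> real" where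
  "U \<theta> = U_poly (sin \<theta>) (cos \<theta>)"

lemma U_nonneg: "0 \<le> U \<theta>"
proof -
  have "U \<theta> = 1.4772 + 0.0041 * sin \<theta> + 0.1493 * cos \<theta> + 0.0383 * sin (2 * \<theta>)
      - 0.3123 * cos (2 * \<theta>)"
    unfolding U_def U_poly_def by (simp add: sin_double cos_double)
  moreover have "-1 \<le> sin \<theta>" "-1 \<le> cos \<theta>" "-1 \<le> sin (2 * \<theta>)" "cos (2 * \<theta>) \<le> 1"
    by simp_all
  ultimately show ?thesis by (simp; linarith)
qed

lemma U_double: "U (2 * \<phi>) = U_poly (2 * sin \<phi> * cos \<phi>) ((cos \<phi>)^2 - (sin \<phi>)^2)"
  unfolding U_def by (simp add: sin_double cos_double)

text \<open>With \<open>t = tan (\<phi>/2)\<close>, \<open>cert_one t\<close> is \<open>(1+t\<^sup>2)\<^sup>4\<close> times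
  \<open>U (2\<phi>) - sin (2\<phi>) - 0.5613 U (\<phi> + \<pi>/2)\<close>, and \<open>cert_zero t\<close> is \<open>(1+t\<^sup>2)\<^sup>4\<close> times
  \<open>U (2\<phi>) + sin (2\<phi>) - 0.5613 U \<phi>\<close>.\<close>

definition cert_one :: "real \<Rightarrow> real" where
  "cert_one t = 1921577/6250000 - 171180233/50000000 * t + 571798193/50000000 * t^2
     - 55395963/10000000 * t^3 - 885638713/50000000 * t^4 + 327261069/50000000 * t^5
     + 572258459/50000000 * t^6 + 187940651/50000000 * t^7 + 15602749/50000000 * t^8"

definition cert_zero :: "real \<Rightarrow> real" where
  "cert_zero t = 28826977/50000000 + 211610309/50000000 * t + 493530521/50000000 * t^2
     + 88590043/50000000 * t^3 - 1060932703/50000000 * t^4 - 89970841/50000000 * t^5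
     + 510290939/50000000 * t^6 - 8482823/2000000 * t^7 + 18603593/25000000 * t^8"

lemma cert_one_nonneg:
  assumes "0 \<le> t" and "t \<le> 1"
  shows "0 \<le> cert_one t"
proof -
  have quarter1: "cert_one t = bernstein_form [7870779392/390625, 41055165312/390625, 85301876384/390625,
      88200594184/390625, 45679776214/390625, 859774501/31250, 3982181547/625000,
      2367393899/500000, 65445591257/50000000] 0 (1/4) t"
    and quarter2: "cert_one t = bernstein_form [65445591257/50000000, 202597517553/12500000,
      541766160743/6250000, 742548200941/3125000, 142321279694/390625, 252143933027/781250,
      63322152089/390625, 3312439782/78125, 70754974/15625] (1/4) (1/2) t"
    and quarter3: "cert_one t = bernstein_form [70754974/15625, 2347958138/78125, 29565294549/390625,
      70049717829/781250, 24654317099/390625, 1882165231/25000, 707908719307/6250000,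
      42402712687/500000, 1857114433/80000] (1/2) (3/4) t"
    and quarter4: "cert_one t = bernstein_form [1857114433/80000, 143308730613/500000,
      1192148160979/781250, 1781282509849/390625, 3265724852344/390625, 752701617952/78125,
      2665371130368/390625, 1061982045184/390625, 182494707712/390625] (3/4) 1 t"
    unfolding bernstein_form_def cert_one_def by (simp_all add: eval_nat_numeral) algebra+
  consider "t \<le> 1/4" | "1/4 \<le> t" "t \<le> 1/2" | "1/2 \<le> t" "t \<le> 3/4" | "3/4 \<le> t"
    by linarith
  then show ?thesis
  proof cases
    case 1 show ?thesis unfolding quarter1 using 1 assms by (intro bernstein_form_nonneg) auto
  next
    case 2 show ?thesis unfolding quarter2 using 2 by (intro bernstein_form_nonneg) auto
  next
    case 3 show ?thesis unfolding quarter3 using 3 by (intro bernstein_form_nonneg) auto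
  next
    case 4 show ?thesis unfolding quarter4 using 4 assms by (intro bernstein_form_nonneg) auto
  qed
qed

lemma cert_zero_nonneg:
  assumes "0 \<le> t" and "t \<le> 1"
  shows "0 \<le> cert_zero t"
proof -
  have "cert_zero t = bernstein_form [28826977/50000000, 3537809/400000, 69548951/1250000,
      910790037/5000000, 4052306133/12500000, 3860870181/12500000, 115853317/781250,
      176361161/6250000, 55327/390625] 0 1 t"
    unfolding bernstein_form_def cert_zero_def by (simp add: eval_nat_numeral) algebra
  then show ?thesis
    using assms by (simp add: bernstein_form_nonneg)
qed

lemma U_step_one:
  assumes "0 \<le> \<theta>" and "\<theta> \<le> pi" and "0 \<le> \<gamma>" and "\<gamma> \<le> 0.5613"
  shows "sin \<theta> + \<gamma> * U ((\<theta> + pi) / 2) \<le> U \<theta>"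
proof -
  define \<phi> where "\<phi> = \<theta> / 2"
  have \<theta>: "(\<theta> + pi) / 2 = \<phi> + pi / 2" "\<theta> = 2 * \<phi>" unfolding \<phi>_def by simp_all
  define s c where "s = sin \<phi>" and "c = cos \<phi>"
  have "0 \<le> s" "0 \<le> c" using assms unfolding s_def c_def \<phi>_def by (auto intro!: sin_ge_zero cos_ge_zero)
  then obtain t where t: "0 \<le> t" "t \<le> 1" "s * (1 + t^2) = 2 * t" "c * (1 + t^2) = 1 - t^2"
    using quarter_circle_rational_param[of s c] unfolding s_def c_def by auto
  have "U (\<phi> + pi / 2) = U_poly c (- s)" unfolding U_def s_def c_def by (simp add: sin_add cos_add)
  then have "(U (2 * \<phi>) - sin (2 * \<phi>) - 0.5613 * U (\<phi> + pi / 2)) * (1 + t^2)^4 = cert_one t"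
    (is "?E * ?D = _")
    using t unfolding U_double sin_double s_def[symmetric] c_def[symmetric] U_poly_def cert_one_def
    by algebra
  moreover have "0 < ?D" by (intro zero_less_power) (simp add: add_pos_nonneg)
  ultimately have "0 \<le> ?E"
    using cert_one_nonneg[OF t(1,2)] by (metis mult_le_cancel_right_pos mult_zero_left)
  then have "sin (2 * \<phi>) + 0.5613 * U (\<phi> + pi / 2) \<le> U (2 * \<phi>)"
    by simp
  moreover have "\<gamma> * U (\<phi> + pi / 2) \<le> 0.5613 * U (\<phi> + pi / 2)"
    using assms U_nonneg by (intro mult_right_mono) auto
  ultimately show ?thesis unfolding \<theta>(1) unfolding \<theta>(2) by linarith
qed

lemma U_step_zero:
  assumes "0 \<le> \<theta>" and "\<theta> \<le> pi" and "0 \<le> \<gamma>" and "\<gamma> \<le> 0.5613"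
  shows "- sin \<theta> + \<gamma> * U (\<theta> / 2) \<le> U \<theta>"
proof -
  define \<phi> where "\<phi> = \<theta> / 2"
  have \<theta>: "\<theta> / 2 = \<phi>" "\<theta> = 2 * \<phi>" unfolding \<phi>_def by simp_all
  define s c where "s = sin \<phi>" and "c = cos \<phi>"
  have "0 \<le> s" "0 \<le> c" using assms unfolding s_def c_def \<phi>_def by (auto intro!: sin_ge_zero cos_ge_zero)
  then obtain t where t: "0 \<le> t" "t \<le> 1" "s * (1 + t^2) = 2 * t" "c * (1 + t^2) = 1 - t^2"
    using quarter_circle_rational_param[of s c] unfolding s_def c_def by auto
  have "U \<phi> = U_poly s c" unfolding U_def s_def c_def ..
  then have "(U (2 * \<phi>) + sin (2 * \<phi>) - 0.5613 * U \<phi>) * (1 + t^2)^4 = cert_zero t"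
    (is "?E * ?D = _")
    using t unfolding U_double sin_double s_def[symmetric] c_def[symmetric] U_poly_def cert_zero_def
    by algebra
  moreover have "0 < ?D" by (intro zero_less_power) (simp add: add_pos_nonneg)
  ultimately have "0 \<le> ?E"
    using cert_zero_nonneg[OF t(1,2)] by (metis mult_le_cancel_right_pos mult_zero_left)
  then have "- sin (2 * \<phi>) + 0.5613 * U \<phi> \<le> U (2 * \<phi>)"
    by simp
  moreover have "\<gamma> * U \<phi> \<le> 0.5613 * U \<phi>"
    using assms U_nonneg by (intro mult_right_mono) auto
  ultimately show ?thesis unfolding \<theta>(1) unfolding \<theta>(2) by linarith
qed

lemma U_pair_gap:
  assumes "0 \<le> \<theta>" and "\<theta> \<le> pi / 2" and "\<bar>cos (2 * \<theta>)\<bar> \<le> 0.391"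
    and "0 \<le> \<gamma>" and "\<gamma> \<le> 0.5613"
  shows "0.02 \<le> 2 * sin (2 * \<theta>) - \<gamma> * (U \<theta> + U (pi / 2 - \<theta>))"
proof -
  define a b where "a = sin \<theta>" and "b = cos \<theta>"
  define p q where "p = a + b" and "q = 2 * a * b"
  have "0 \<le> a" "0 \<le> b" unfolding a_def b_def using assms by (auto intro!: sin_ge_zero cos_ge_zero)
  then have "0 \<le> p" "0 \<le> q" unfolding p_def q_def by simp_all
  have ab: "a^2 + b^2 = 1" unfolding a_def b_def by simp
  have sin2: "sin (2 * \<theta>) = q" unfolding q_def a_def b_def by (simp add: sin_double)
  have "q^2 + (cos (2 * \<theta>))^2 = 1"
    using ab unfolding q_def a_def b_def cos_double by algebra
  moreover have "(cos (2 * \<theta>))^2 \<le> 0.391^2"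
    using assms(3) abs_le_square_iff[of "cos (2 * \<theta>)" "0.391"] by simp
  moreover have "(0.9203::real)^2 \<le> 1 - 0.391^2" by (simp add: power2_eq_square)
  ultimately have "0.9203^2 \<le> q^2" by linarith
  then have "0.9203 \<le> q" using \<open>0 \<le> q\<close> by (rule power2_le_imp_le)
  moreover have p2: "p^2 = 1 + q" using ab unfolding p_def q_def by algebra
  moreover have "(1.3856::real)^2 \<le> 1 + 0.9203" by (simp add: power2_eq_square)
  ultimately have "1.3856^2 \<le> p^2" by linarith
  then have p_ge: "1.3856 \<le> p" using \<open>0 \<le> p\<close> by (rule power2_le_imp_le)
  have U_sum: "U \<theta> + U (pi / 2 - \<theta>) = 2 * 1.4772 + 0.1534 * p + 0.0766 * q"
  proof -
    have complement: "sin (pi / 2 - \<theta>) = b" "cos (pi / 2 - \<theta>) = a"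
      unfolding a_def b_def by (simp_all add: sin_diff cos_diff)
    show ?thesis
      unfolding U_def complement a_def[symmetric] b_def[symmetric] U_poly_def p_def q_def by algebra
  qed
  define F where "F w = 2 * (w^2 - 1) - 0.5613 * (2 * 1.4772 + 0.1534 * w + 0.0766 * (w^2 - 1))"
    for w :: real
  have "F p - F 1.3856 = (p - 1.3856) * (2 * (1 - 0.5613 * 0.0383) * (p + 1.3856) - 0.5613 * 0.1534)"
    unfolding F_def by algebra
  moreover have "0 \<le> (p - 1.3856) * (2 * (1 - 0.5613 * 0.0383) * (p + 1.3856) - 0.5613 * 0.1534)"
    using p_ge by (intro mult_nonneg_nonneg) auto
  moreover have "0.02 \<le> F 1.3856" unfolding F_def by (simp add: power2_eq_square)
  moreover have "F p = 2 * sin (2 * \<theta>) - 0.5613 * (U \<theta> + U (pi / 2 - \<theta>))"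
    unfolding F_def U_sum sin2 p2 by (simp add: algebra_simps)
  moreover have "\<gamma> * (U \<theta> + U (pi / 2 - \<theta>)) \<le> 0.5613 * (U \<theta> + U (pi / 2 - \<theta>))"
    using assms U_nonneg[of \<theta>] U_nonneg[of "pi / 2 - \<theta>"] by (intro mult_right_mono) auto
  ultimately show ?thesis by linarith
qed

lemma psi_half: "psi (y / 2) = - 2 * pi * sin (pi * y)"
  unfolding psi_def by simp

lemma psi_half_plus_half: "psi ((y + 1) / 2) = 2 * pi * sin (pi * y)"
proof -
  have "2 * pi * ((y + 1) / 2) = pi * y + pi" by (simp add: field_simps)
  then show ?thesis unfolding psi_def by (simp add: sin_periodic_pi)
qed

lemma psi_plus_U_le_U:
  assumes "0 \<le> y" and "y \<le> 1" and "0 \<le> \<gamma>" and "\<gamma> \<le> 0.5613"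
  shows "psi ((y + of_bool b) / 2) + \<gamma> * (2 * pi * U (pi * ((y + of_bool b) / 2)))
    \<le> 2 * pi * U (pi * y)"
proof (cases b)
  case True
  then have b: "of_bool b = (1::real)" by simp
  have "pi * ((y + 1) / 2) = (pi * y + pi) / 2" by (simp add: field_simps)
  then have "psi ((y + of_bool b) / 2) + \<gamma> * (2 * pi * U (pi * ((y + of_bool b) / 2)))
      = 2 * pi * (sin (pi * y) + \<gamma> * U ((pi * y + pi) / 2))"
    unfolding b psi_half_plus_half by (simp add: algebra_simps)
  moreover have "sin (pi * y) + \<gamma> * U ((pi * y + pi) / 2) \<le> U (pi * y)"
    using assms by (intro U_step_one) auto
  ultimately show ?thesis by simp
next
  case False
  then have "psi ((y + of_bool b) / 2) + \<gamma> * (2 * pi * U (pi * ((y + of_bool b) / 2)))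
      = 2 * pi * (- sin (pi * y) + \<gamma> * U (pi * y / 2))"
    by (simp add: psi_half algebra_simps)
  moreover have "- sin (pi * y) + \<gamma> * U (pi * y / 2) \<le> U (pi * y)"
    using assms by (intro U_step_zero) auto
  ultimately show ?thesis by simp
qed

definition S_arg :: "real \<Rightarrow> (nat \<Rightarrow> bool) \<Rightarrow> nat \<Rightarrow> real" where
  "S_arg x i m = (x + (\<Sum>k\<le>m. of_bool (i k) * 2 ^ k)) / 2 ^ Suc m"

lemma S_eq_suminf: "S \<gamma> x i = (\<Sum>m. \<gamma> ^ m * psi (S_arg x i m))"
  unfolding S_def S_arg_def ..

lemma S_arg_0: "S_arg x i 0 = (x + of_bool (i 0)) / 2"
  unfolding S_arg_def by simp

lemma S_arg_Suc: "S_arg x i (Suc m) = S_arg ((x + of_bool (i 0)) / 2) (\<lambda>k. i (Suc k)) m"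
proof -
  have "(\<Sum>k\<le>Suc m. of_bool (i k) * (2::real) ^ k)
      = of_bool (i 0) + 2 * (\<Sum>k\<le>m. of_bool (i (Suc k)) * 2 ^ k)"
    unfolding sum.atMost_Suc_shift sum_distrib_left by (simp add: mult.left_commute)
  then show ?thesis unfolding S_arg_def by (simp add: field_simps)
qed

lemma sum_atMost_power_two: "(\<Sum>k\<le>m. (2::real) ^ k) = 2 ^ Suc m - 1"
  by (induction m) simp_all

lemma S_arg_reflect: "S_arg (1 - x) (Not \<circ> i) m = 1 - S_arg x i m"
proof -
  have "(\<Sum>k\<le>m. of_bool (\<not> i k) * (2::real) ^ k)
      = (\<Sum>k\<le>m. 2 ^ k) - (\<Sum>k\<le>m. of_bool (i k) * 2 ^ k)"
    unfolding sum_subtractf[symmetric] by (intro sum.cong) auto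
  then show ?thesis unfolding S_arg_def sum_atMost_power_two by (simp add: field_simps)
qed

lemma psi_abs_le: "\<bar>psi z\<bar> \<le> 2 * pi"
  unfolding psi_def by (simp add: abs_mult)

lemma psi_one_minus: "psi (1 - z) = - psi z"
  unfolding psi_def by (simp add: right_diff_distrib sin_diff)

lemma S_term_abs_le:
  assumes "0 \<le> \<gamma>"
  shows "\<bar>\<gamma> ^ m * psi (S_arg x i m)\<bar> \<le> 2 * pi * \<gamma> ^ m"
  using psi_abs_le[of "S_arg x i m"] assms by (simp add: abs_mult mult_left_mono mult.commute)

lemma S_summable:
  assumes "0 \<le> \<gamma>" and "\<gamma> < 1"
  shows "summable (\<lambda>m. \<gamma> ^ m * psi (S_arg x i m))"
proof (rule summable_comparison_test'[where N = 0])
  show "summable (\<lambda>m. 2 * pi * \<gamma> ^ m)" using assms by simp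
  show "norm (\<gamma> ^ m * psi (S_arg x i m)) \<le> 2 * pi * \<gamma> ^ m" for m
    using S_term_abs_le[OF assms(1)] by simp
qed

lemma S_abs_le:
  assumes "0 \<le> \<gamma>" and "\<gamma> < 1"
  shows "\<bar>S \<gamma> x i\<bar> \<le> 2 * pi / (1 - \<gamma>)"
proof -
  have geo: "summable (\<lambda>m. 2 * pi * \<gamma> ^ m)" using assms by auto
  have abs: "summable (\<lambda>m. \<bar>\<gamma> ^ m * psi (S_arg x i m)\<bar>)"
    by (rule summable_comparison_test'[OF geo, where N = 0]) (simp add: S_term_abs_le[OF assms(1)])
  have "\<bar>S \<gamma> x i\<bar> \<le> (\<Sum>m. \<bar>\<gamma> ^ m * psi (S_arg x i m)\<bar>)"
    unfolding S_eq_suminf by (rule summable_rabs[OF abs])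
  also have "\<dots> \<le> (\<Sum>m. 2 * pi * \<gamma> ^ m)"
    by (rule suminf_le[OF S_term_abs_le[OF assms(1)] abs geo])
  also have "\<dots> = 2 * pi / (1 - \<gamma>)"
    using assms by (simp add: suminf_mult suminf_geometric divide_simps)
  finally show ?thesis .
qed

lemma S_cons:
  assumes "0 \<le> \<gamma>" and "\<gamma> < 1"
  shows "S \<gamma> x i = psi ((x + of_bool (i 0)) / 2)
    + \<gamma> * S \<gamma> ((x + of_bool (i 0)) / 2) (\<lambda>k. i (Suc k))"
proof -
  have "S \<gamma> x i = psi (S_arg x i 0) + (\<Sum>m. \<gamma> ^ Suc m * psi (S_arg x i (Suc m)))"
    unfolding S_eq_suminf using suminf_split_head[OF S_summable[OF assms]] by simp
  also have "(\<Sum>m. \<gamma> ^ Suc m * psi (S_arg x i (Suc m)))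
      = \<gamma> * S \<gamma> ((x + of_bool (i 0)) / 2) (\<lambda>k. i (Suc k))"
    unfolding S_eq_suminf S_arg_Suc
    by (simp add: suminf_mult[OF S_summable[OF assms]] mult.assoc)
  finally show ?thesis unfolding S_arg_0 .
qed

lemma S_reflect:
  assumes "0 \<le> \<gamma>" and "\<gamma> < 1"
  shows "S \<gamma> (1 - x) (Not \<circ> i) = - S \<gamma> x i"
  unfolding S_eq_suminf S_arg_reflect psi_one_minus
  using suminf_minus[OF S_summable[OF assms]] by simp

definition psi' :: "real \<Rightarrow> real" where
  "psi' z = - 4 * pi^2 * cos (2 * pi * z)"

lemma psi_has_derivative: "(psi has_real_derivative psi' z) (at z)"
  unfolding psi_def psi'_def by (auto intro!: derivative_eq_intros simp: power2_eq_square)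

lemma psi'_abs_le: "\<bar>psi' z\<bar> \<le> 4 * pi^2"
  unfolding psi'_def by (simp add: abs_mult)

definition S'_term :: "real \<Rightarrow> real \<Rightarrow> (nat \<Rightarrow> bool) \<Rightarrow> nat \<Rightarrow> real" where
  "S'_term \<gamma> x i m = \<gamma> ^ m * psi' (S_arg x i m) / 2 ^ Suc m"

lemma S_term_has_derivative:
  "((\<lambda>y. \<gamma> ^ m * psi (S_arg y i m)) has_real_derivative S'_term \<gamma> x i m) (at x)"
proof -
  have "((\<lambda>y. S_arg y i m) has_real_derivative 1 / 2 ^ Suc m) (at x)"
    unfolding S_arg_def by (auto intro!: derivative_eq_intros)
  from DERIV_cmult[OF DERIV_chain2[OF psi_has_derivative this], of "\<gamma> ^ m"] show ?thesis
    unfolding S'_term_def by simp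
qed

lemma S'_term_abs_le:
  assumes "0 \<le> \<gamma>"
  shows "\<bar>S'_term \<gamma> x i m\<bar> \<le> 2 * pi^2 * (\<gamma> / 2) ^ m"
proof -
  have "\<bar>S'_term \<gamma> x i m\<bar> = \<gamma> ^ m * \<bar>psi' (S_arg x i m)\<bar> / 2 ^ Suc m"
    unfolding S'_term_def using assms by (simp add: abs_mult)
  also have "\<dots> \<le> \<gamma> ^ m * (4 * pi^2) / 2 ^ Suc m"
    using psi'_abs_le assms by (intro divide_right_mono mult_left_mono) auto
  also have "\<dots> = 2 * pi^2 * (\<gamma> / 2) ^ m" by (simp add: power_divide)
  finally show ?thesis .
qed

lemma S'_term_summable:
  assumes "0 \<le> \<gamma>" and "\<gamma> < 1"
  shows "summable (S'_term \<gamma> x i)"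
proof (rule summable_comparison_test'[where N = 0])
  show "summable (\<lambda>m. 2 * pi^2 * (\<gamma> / 2) ^ m)" using assms by simp
  show "norm (S'_term \<gamma> x i m) \<le> 2 * pi^2 * (\<gamma> / 2) ^ m" for m
    using S'_term_abs_le[OF assms(1)] by simp
qed

lemma S_has_derivative:
  assumes "0 \<le> \<gamma>" and "\<gamma> < 1"
  shows "((\<lambda>y. S \<gamma> y i) has_real_derivative (\<Sum>m. S'_term \<gamma> x i m)) (at x)"
proof -
  have unif: "uniformly_convergent_on UNIV (\<lambda>n y. \<Sum>m<n. S'_term \<gamma> y i m)"
  proof (rule Weierstrass_m_test'[where M = "\<lambda>m. 2 * pi^2 * (\<gamma> / 2) ^ m"])
    show "norm (S'_term \<gamma> y i m) \<le> 2 * pi^2 * (\<gamma> / 2) ^ m" for m y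
      using S'_term_abs_le[OF assms(1)] by simp
    show "summable (\<lambda>m. 2 * pi^2 * (\<gamma> / 2) ^ m)" using assms by simp
  qed
  show ?thesis
    unfolding S_eq_suminf
    by (rule has_field_derivative_series'(2)[of UNIV "\<lambda>m y. \<gamma> ^ m * psi (S_arg y i m)"
          "\<lambda>m y. S'_term \<gamma> y i m" 0 x, OF convex_UNIV _ unif _ S_summable[OF assms]])
      (auto intro: has_field_derivative_at_within S_term_has_derivative)
qed

lemma S'_eq_suminf:
  assumes "0 \<le> \<gamma>" and "\<gamma> < 1"
  shows "S' \<gamma> x i = (\<Sum>m. S'_term \<gamma> x i m)"
  unfolding S'_def by (rule DERIV_imp_deriv[OF S_has_derivative[OF assms]])

lemma S'_approx:
  assumes "0 \<le> \<gamma>" and "\<gamma> < 1"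
  shows "\<bar>S' \<gamma> x i - psi' ((x + of_bool (i 0)) / 2) / 2\<bar> \<le> \<gamma> * pi^2 / (1 - \<gamma> / 2)"
proof -
  have geo: "summable (\<lambda>m. 2 * pi^2 * (\<gamma> / 2) ^ Suc m)" using assms by simp
  have tail_le: "\<bar>S'_term \<gamma> x i (Suc m)\<bar> \<le> 2 * pi^2 * (\<gamma> / 2) ^ Suc m" for m
    by (rule S'_term_abs_le[OF assms(1)])
  have tail_abs: "summable (\<lambda>m. \<bar>S'_term \<gamma> x i (Suc m)\<bar>)"
    by (rule summable_comparison_test'[OF geo, where N = 0]) (use tail_le in simp)
  have "S' \<gamma> x i = S'_term \<gamma> x i 0 + (\<Sum>m. S'_term \<gamma> x i (Suc m))"
    unfolding S'_eq_suminf[OF assms] using suminf_split_head[OF S'_term_summable[OF assms]] by simp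
  moreover have "S'_term \<gamma> x i 0 = psi' ((x + of_bool (i 0)) / 2) / 2"
    unfolding S'_term_def S_arg_0 by simp
  moreover have "\<bar>\<Sum>m. S'_term \<gamma> x i (Suc m)\<bar> \<le> (\<Sum>m. 2 * pi^2 * (\<gamma> / 2) ^ Suc m)"
    using summable_rabs[OF tail_abs] suminf_le[OF tail_le tail_abs geo]
    by linarith
  moreover have "(\<Sum>m. 2 * pi^2 * (\<gamma> / 2) ^ Suc m) = \<gamma> * pi^2 * (\<Sum>m. (\<gamma> / 2) ^ m)"
    using assms by (subst suminf_mult[symmetric]) (auto simp: mult_ac)
  moreover have "(\<Sum>m. (\<gamma> / 2) ^ m) = 1 / (1 - \<gamma> / 2)"
    using assms by (intro suminf_geometric) auto
  ultimately show ?thesis by simp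
qed

lemma S_le_U_plus_geometric:
  assumes "0 \<le> \<gamma>" and "\<gamma> \<le> 0.5613" and "0 \<le> y" and "y \<le> 1"
  shows "S \<gamma> y i \<le> 2 * pi * U (pi * y) + \<gamma> ^ n * (2 * pi / (1 - \<gamma>))"
  using assms(3,4)
proof (induction n arbitrary: y i)
  case 0
  have "S \<gamma> y i \<le> 2 * pi / (1 - \<gamma>)" using S_abs_le[of \<gamma> y i] assms by (simp add: abs_le_iff)
  moreover have "0 \<le> 2 * pi * U (pi * y)" using U_nonneg by simp
  ultimately show ?case by simp
next
  case (Suc n)
  define z where "z = (y + of_bool (i 0)) / 2"
  have "0 \<le> z" "z \<le> 1" using Suc.prems unfolding z_def by auto
  have "S \<gamma> y i = psi z + \<gamma> * S \<gamma> z (\<lambda>k. i (Suc k))"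
    unfolding z_def using assms by (intro S_cons) auto
  also have "\<dots> \<le> psi z + \<gamma> * (2 * pi * U (pi * z) + \<gamma> ^ n * (2 * pi / (1 - \<gamma>)))"
    using Suc.IH[OF \<open>0 \<le> z\<close> \<open>z \<le> 1\<close>] assms(1) by (simp add: mult_left_mono)
  also have "\<dots> \<le> 2 * pi * U (pi * y) + \<gamma> ^ Suc n * (2 * pi / (1 - \<gamma>))"
    using psi_plus_U_le_U[OF Suc.prems assms(1,2), of "i 0"] unfolding z_def
    by (simp add: algebra_simps)
  finally show ?case .
qed

lemma S_le_U:
  assumes "0 \<le> \<gamma>" and "\<gamma> \<le> 0.5613" and "0 \<le> y" and "y \<le> 1"
  shows "S \<gamma> y i \<le> 2 * pi * U (pi * y)"
proof (rule LIMSEQ_le_const)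
  have "(\<lambda>n. \<gamma> ^ n * (2 * pi / (1 - \<gamma>))) \<longlonglongrightarrow> 0"
    using assms by (intro tendsto_mult_left_zero LIMSEQ_power_zero) auto
  from tendsto_add[OF tendsto_const this]
  show "(\<lambda>n. 2 * pi * U (pi * y) + \<gamma> ^ n * (2 * pi / (1 - \<gamma>))) \<longlonglongrightarrow> 2 * pi * U (pi * y)"
    by simp
  show "\<exists>N. \<forall>n\<ge>N. S \<gamma> y i \<le> 2 * pi * U (pi * y) + \<gamma> ^ n * (2 * pi / (1 - \<gamma>))"
    using S_le_U_plus_geometric[OF assms] by blast
qed

lemma S_ge_minus_U:
  assumes "0 \<le> \<gamma>" and "\<gamma> \<le> 0.5613" and "0 \<le> y" and "y \<le> 1"
  shows "- 2 * pi * U (pi * (1 - y)) \<le> S \<gamma> y i"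
proof -
  have "S \<gamma> y i = - S \<gamma> (1 - y) (Not \<circ> i)"
    using S_reflect[of \<gamma> "1 - y" "Not \<circ> i"] assms by (simp add: comp_def)
  moreover have "S \<gamma> (1 - y) (Not \<circ> i) \<le> 2 * pi * U (pi * (1 - y))"
    using assms by (intro S_le_U) auto
  ultimately show ?thesis by simp
qed

lemma S_conc_singleton:
  assumes "0 \<le> \<gamma>" and "\<gamma> < 1"
  shows "S \<gamma> x (conc [b] u) = psi ((x + of_bool b) / 2) + \<gamma> * S \<gamma> ((x + of_bool b) / 2) u"
proof -
  have "conc [b] u 0 = b" "(\<lambda>k. conc [b] u (Suc k)) = u" unfolding conc_def by auto
  then show ?thesis using S_cons[OF assms, of x "conc [b] u"] by simp
qed

lemma S'_conc_singleton_approx: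
  assumes "0 \<le> \<gamma>" and "\<gamma> < 1"
  shows "\<bar>S' \<gamma> x (conc [b] u) - psi' ((x + of_bool b) / 2) / 2\<bar> \<le> \<gamma> * pi^2 / (1 - \<gamma> / 2)"
  using S'_approx[OF assms, of x "conc [b] u"] by (simp add: conc_def)

lemma first_digit_value_gap:
  assumes "0 \<le> \<gamma>" and "\<gamma> \<le> 0.5613" and "0 \<le> x" and "x \<le> 1"
    and "\<bar>cos (pi * x)\<bar> \<le> 0.391"
  shows "0.01 < S \<gamma> x (conc [True] v) - S \<gamma> x (conc [False] u)"
proof -
  define \<theta> where "\<theta> = pi * x / 2"
  have \<theta>: "2 * \<theta> = pi * x" "pi * (x / 2) = \<theta>" "pi * (1 - (x + 1) / 2) = pi / 2 - \<theta>"
    unfolding \<theta>_def by (simp_all add: field_simps)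
  have "0.02 \<le> 2 * sin (pi * x) - \<gamma> * (U \<theta> + U (pi / 2 - \<theta>))"
    using U_pair_gap[of \<theta> \<gamma>] assms unfolding \<theta>(1) by (simp add: \<theta>_def)
  then have "2 * pi * 0.02 \<le> 2 * pi * (2 * sin (pi * x) - \<gamma> * (U \<theta> + U (pi / 2 - \<theta>)))"
    by (intro mult_left_mono) auto
  moreover have "S \<gamma> (x / 2) u - S \<gamma> ((x + 1) / 2) v \<le> 2 * pi * (U \<theta> + U (pi / 2 - \<theta>))"
    using S_le_U[of \<gamma> "x / 2" u] S_ge_minus_U[of \<gamma> "(x + 1) / 2" v] assms
    unfolding \<theta>(2,3) by (simp add: algebra_simps)
  then have "\<gamma> * (S \<gamma> (x / 2) u - S \<gamma> ((x + 1) / 2) v) \<le> \<gamma> * (2 * pi * (U \<theta> + U (pi / 2 - \<theta>)))"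
    using assms(1) by (rule mult_left_mono)
  moreover have "S \<gamma> x (conc [True] v) - S \<gamma> x (conc [False] u)
      = 4 * pi * sin (pi * x) - \<gamma> * (S \<gamma> (x / 2) u - S \<gamma> ((x + 1) / 2) v)"
    using assms by (simp add: S_conc_singleton psi_half psi_half_plus_half algebra_simps)
  moreover have "0.01 < 2 * pi * 0.02" using pi_gt3 by simp
  ultimately show ?thesis by (simp add: algebra_simps)
qed

lemma first_digit_slope_gap:
  assumes "0 \<le> \<gamma>" and "\<gamma> \<le> 0.5613" and "0.391 < \<bar>cos (pi * x)\<bar>"
  shows "0.01 < \<bar>S' \<gamma> x (conc [False] u) - S' \<gamma> x (conc [True] v)\<bar>"
proof -
  define A where "A = 2 * pi^2 * cos (pi * x)"
  define R where "R = \<gamma> * pi^2 / (1 - \<gamma> / 2)"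
  have "psi' (x / 2) / 2 = - A" unfolding psi'_def A_def by simp
  then have zero: "\<bar>S' \<gamma> x (conc [False] u) + A\<bar> \<le> R"
    using S'_conc_singleton_approx[of \<gamma> x False u] assms unfolding R_def by simp
  have "2 * pi * ((x + 1) / 2) = pi * x + pi" by (simp add: field_simps)
  then have "psi' ((x + 1) / 2) / 2 = A" unfolding psi'_def A_def by (simp add: cos_periodic_pi)
  then have one: "\<bar>S' \<gamma> x (conc [True] v) - A\<bar> \<le> R"
    using S'_conc_singleton_approx[of \<gamma> x True v] assms unfolding R_def by simp
  have "\<gamma> / (1 - \<gamma> / 2) \<le> 0.7804" using assms by (simp add: divide_le_eq)
  then have "\<gamma> / (1 - \<gamma> / 2) * pi^2 \<le> 0.7804 * pi^2" by (rule mult_right_mono) simp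
  then have "R \<le> 0.7804 * pi^2" unfolding R_def by simp
  moreover have "0.782 * pi^2 \<le> \<bar>A\<bar>"
    using assms(3) unfolding A_def by (simp add: abs_mult mult_right_mono)
  moreover have "9 \<le> pi^2" using pi_gt3 power_mono[of 3 pi 2] by simp
  ultimately show ?thesis using zero one by (simp add: abs_le_iff abs_if split: if_splits)
qed

lemma first_digits_not_tangent:
  assumes "0 \<le> \<gamma>" and "\<gamma> \<le> 0.5613" and "0 \<le> x" and "x \<le> 1"
  shows "\<not> tangent \<gamma> 0.01 0.01 x (conc [False] u) (conc [True] v)"
proof (cases "\<bar>cos (pi * x)\<bar> \<le> 0.391")
  case True
  then show ?thesis
    using first_digit_value_gap[OF assms True, of v u] unfolding tangent_def by auto
next
  case False
  then show ?thesis
    using first_digit_slope_gap[OF assms(1,2), of x u v] unfolding tangent_def by auto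
qed

lemma E_set_one_row:
  assumes "0 \<le> \<gamma>" and "\<gamma> \<le> 0.5613" and "J \<subseteq> {0..1}" and "J \<noteq> {}" and "length k = 1"
  shows "{l. (k, l) \<in> E_set \<gamma> 1 J} = {k}"
proof
  obtain x where "x \<in> J" using assms(4) by blast
  have "(k, k) \<in> E_pt \<gamma> 1 x \<epsilon> \<delta>" if "0 < \<epsilon>" "0 < \<delta>" for \<epsilon> \<delta>
  proof -
    have "tangent \<gamma> \<epsilon> \<delta> x (conc k (\<lambda>_. False)) (conc k (\<lambda>_. False))"
      using that unfolding tangent_def by simp
    then show ?thesis using assms(5) unfolding E_pt_def by auto
  qed
  then show "{k} \<subseteq> {l. (k, l) \<in> E_set \<gamma> 1 J}"
    using \<open>x \<in> J\<close> unfolding E_set_def by blast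
next
  show "{l. (k, l) \<in> E_set \<gamma> 1 J} \<subseteq> {k}"
  proof
    fix l assume "l \<in> {l. (k, l) \<in> E_set \<gamma> 1 J}"
    then have "(k, l) \<in> (\<Union>x\<in>J. E_pt \<gamma> 1 x 0.01 0.01)" unfolding E_set_def by auto
    then obtain x u v where "x \<in> J" and "length l = 1"
      and tan: "tangent \<gamma> 0.01 0.01 x (conc k u) (conc l v)"
      unfolding E_pt_def by auto
    then have "0 \<le> x" "x \<le> 1" using assms(3) by auto
    obtain a b where "k = [a]" "l = [b]"
      using assms(5) \<open>length l = 1\<close> by (metis length_0_conv length_Suc_conv One_nat_def)
    moreover have "tangent \<gamma> 0.01 0.01 x (conc l v) (conc k u)"
      using tan unfolding tangent_def by (simp add: abs_minus_commute)
    ultimately show "l \<in> {k}"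
      using tan first_digits_not_tangent[OF assms(1,2) \<open>0 \<le> x\<close> \<open>x \<le> 1\<close>]
      by (cases a; cases b) auto
  qed
qed

lemma e_J_one:
  assumes "0 \<le> \<gamma>" and "\<gamma> \<le> 0.5613" and "J \<subseteq> {0..1}" and "J \<noteq> {}"
  shows "e_J \<gamma> 1 J = 1"
proof -
  have "(\<lambda>k. card {l. (k, l) \<in> E_set \<gamma> 1 J}) ` {k. length k = 1} = (\<lambda>k. 1) ` {k::bool list. length k = 1}"
    using E_set_one_row[OF assms] by (intro image_cong) auto
  also have "\<dots> = {1}" by (rule image_constant[of "[False]"]) simp
  finally show ?thesis unfolding e_J_def by simp
qed

lemma le_0_5613_if_cube_le:
  fixes \<gamma> :: real
  assumes "0 \<le> \<gamma>" and "\<gamma> ^ 3 \<le> sqrt 2 / 8"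
  shows "\<gamma> \<le> 0.5613"
proof (rule ccontr)
  assume "\<not> \<gamma> \<le> 0.5613"
  then have "0.5613 ^ 3 < \<gamma> ^ 3" by (intro power_strict_mono) auto
  moreover have "sqrt 2 \<le> sqrt (1.4146^2)" by (rule real_sqrt_le_mono) (simp add: power2_eq_square)
  then have "sqrt 2 / 8 \<le> 1.4146 / 8" by simp
  moreover have "(1.4146::real) / 8 \<le> 0.5613 ^ 3" by (simp add: power3_eq_cube)
  ultimately show False using assms(2) by linarith
qed

theorem proposition5:
  fixes \<gamma> :: real
  assumes "1/2 < \<gamma>" and "\<gamma> < 1" and "\<gamma> ^ 3 \<le> sqrt 2 / 8"
  shows "e \<gamma> 1 = 1"
proof -
  have "0 \<le> \<gamma>" using assms(1) by simp
  moreover have "\<gamma> \<le> 0.5613" using le_0_5613_if_cube_le assms by simp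
  moreover have "{real k / 2 ^ p .. real (Suc k) / 2 ^ p} \<subseteq> {0..1}" if "k < 2 ^ p" for k p :: nat
  proof -
    have "real (Suc k) \<le> 2 ^ p" using that by (metis Suc_leI of_nat_le_iff of_nat_numeral of_nat_power)
    then show ?thesis by auto
  qed
  ultimately have "e_J \<gamma> 1 {real k / 2 ^ p .. real (Suc k) / 2 ^ p} = 1" if "k < 2 ^ p" for k p :: nat
    using that by (intro e_J_one) (auto simp: divide_right_mono)
  then have "(\<lambda>k. e_J \<gamma> 1 {real k / 2 ^ p .. real (Suc k) / 2 ^ p}) ` {..<(2::nat) ^ p}
      = (\<lambda>_. 1) ` {..<(2::nat) ^ p}" for p
    by (intro image_cong) auto
  moreover have "(\<lambda>_. 1::nat) ` {..<(2::nat) ^ p} = {1}" for p by (rule image_constant[of 0]) simp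
  ultimately have "(\<lambda>k. e_J \<gamma> 1 {real k / 2 ^ p .. real (Suc k) / 2 ^ p}) ` {..<(2::nat) ^ p} = {1}"
    for p by simp
  then show ?thesis unfolding e_def by simp
qed

end
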